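(* In $D^{2,2,2}$, for every permutation $\{i,j,k\}$ of $\{1,2,3\}$: 1. $a^{ij}_0\supseteq a^{ij}_1\supseteq\cdots\supseteq a^{ij}_n\supseteq\cdots$, and $a^{ij}_n\supseteq x_i+x_j$ for all $n\ge0$; 2. $A^{ij}_0\supseteq A^{ij}_1\supseteq\cdots\supseteq A^{ij}_n\supseteq\cdots$; 3. $x_kA^{ij}_n=x_ka^{ji}_n$ for all $n\ge0$; 4. $A^{ij}_n=y_i+x_ja^{ik}_{n-1}$ for all $n\ge1$; 5. $y_iy_jA^{ki}_n=y_iy_ja^{ik}_n$ for all $n\ge0$; 6. $y_ia^{ij}_{n+1}=y_i(x_i+y_jA^{kj}_n)$ for all $n\ge0$.
   Context: $D^{2,2,2}$ is the modular lattice generated by $x_1,y_1,x_2,y_2,x_3,y_3$ subject only to $x_i\subseteq y_i$ ($i=1,2,3$), with a greatest element $I$ adjoined. Meet is written $ab$, join $a+b$, order $\subseteq$. Atomic elements: for distinct $i,j$, let $k$ denote the third index. Define - $a^{ij}_0=I$ and $a^{ij}_n=x_i+y_ja^{jk}_{n-1}$ for $n\ge1$; - $A^{ij}_0=I$ and $A^{ij}_n=y_i+x_jA^{ki}_{n-1}$ for $n\ge1$. *)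

theory Defs
  imports Main
begin

text \<open>Indices range over {1,2,3}; for distinct i j in {1,2,3}, third i j is the remaining index.\<close>
definition third :: "nat \<Rightarrow> nat \<Rightarrow> nat" where
  "third i j = 6 - i - j"

fun aa :: "(nat \<Rightarrow> 'a::bounded_lattice_top) \<Rightarrow> (nat \<Rightarrow> 'a) \<Rightarrow> nat \<Rightarrow> nat \<Rightarrow> nat \<Rightarrow> 'a" where
  "aa x y i j 0 = top"
| "aa x y i j (Suc n) = sup (x i) (inf (y j) (aa x y j (third i j) n))"

fun AA :: "(nat \<Rightarrow> 'a::bounded_lattice_top) \<Rightarrow> (nat \<Rightarrow> 'a) \<Rightarrow> nat \<Rightarrow> nat \<Rightarrow> nat \<Rightarrow> 'a" where
  "AA x y i j 0 = top"
| "AA x y i j (Suc n) = sup (y i) (inf (x j) (AA x y (third i j) i n))"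

end

theory Submission
  imports Defs
begin

text \<open>
  Everything rests on two consequences of the modular law. Below an element c the roles of p
  and q in p + qc may be exchanged, because c(p + qc) = pc + qc; and below an element c
  containing a, the term a + cw may be replaced by a + w. Formula (4) then follows by induction
  on n with one exchange per step, and (3) is (4) followed by one more exchange. Formula (5) is
  proved by an induction that cycles the three indices, exchanging below y_i y_j, which lies
  under every A^{jk}_n; (6) is (5) inserted under the outer y_i.
\<close>

class modular_lattice = lattice +
  assumes modular: "x \<le> z \<Longrightarrow> sup x (inf y z) = inf (sup x y) z"
begin

lemma modular_inf_sup_swap:
  assumes "z \<le> c"
  shows "inf z (sup p (inf q c)) = inf z (sup q (inf p c))"
proof -
  have "inf c (sup p (inf q c)) = inf c (sup q (inf p c))"
    using modular[of "inf q c" c p] modular[of "inf p c" c q]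
    by (simp add: inf_commute sup_commute)
  then have "inf z (inf c (sup p (inf q c))) = inf z (inf c (sup q (inf p c)))"
    by simp
  with \<open>z \<le> c\<close> show ?thesis
    by (simp add: inf.absorb1 flip: inf.assoc)
qed

lemma modular_inf_sup_inf_absorb:
  assumes "a \<le> c" "z \<le> c"
  shows "inf z (sup a (inf c w)) = inf z (sup a w)"
proof -
  have "inf z (sup a (inf c w)) = inf (inf z c) (sup a w)"
    using modular[OF \<open>a \<le> c\<close>, of w] by (simp add: ac_simps)
  with \<open>z \<le> c\<close> show ?thesis
    by (simp add: inf.absorb1)
qed

end

definition index_perm :: "nat \<Rightarrow> nat \<Rightarrow> nat \<Rightarrow> bool" where
  "index_perm i j k \<longleftrightarrow>
     i \<in> {1,2,3} \<and> j \<in> {1,2,3} \<and> k \<in> {1,2,3} \<and>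
     i \<noteq> j \<and> j \<noteq> k \<and> i \<noteq> k"

lemma index_perm_rotate: "index_perm i j k \<Longrightarrow> index_perm j k i"
  and index_perm_swap: "index_perm i j k \<Longrightarrow> index_perm j i k"
  and index_perm_third: "index_perm i j k \<Longrightarrow> third i j = k"
  by (auto simp: index_perm_def third_def)

lemma aa_Suc_le: "aa x y i j (Suc n) \<le> aa x y i j n"
proof (induction n arbitrary: i j)
  case (Suc n)
  have "aa x y j (third i j) (Suc n) \<le> aa x y j (third i j) n"
    by (rule Suc.IH)
  then show ?case
    unfolding aa.simps(2)[of x y i j] by (intro sup_mono inf_mono order_refl)
qed simp

lemma AA_Suc_le: "AA x y i j (Suc n) \<le> AA x y i j n"
proof (induction n arbitrary: i j)
  case (Suc n)
  have "AA x y (third i j) i (Suc n) \<le> AA x y (third i j) i n"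
    by (rule Suc.IH)
  then show ?case
    unfolding AA.simps(2)[of x y i j] by (intro sup_mono inf_mono order_refl)
qed simp

lemma y_le_AA: "y i \<le> AA x y i j n"
  by (cases n) auto

lemma aa_Suc_perm:
  "index_perm i j k \<Longrightarrow> aa x y i j (Suc n) = sup (x i) (inf (y j) (aa x y j k n))"
  by (simp add: index_perm_third)

lemma AA_Suc_perm:
  "index_perm i j k \<Longrightarrow> AA x y i j (Suc n) = sup (y i) (inf (x j) (AA x y k i n))"
  by (simp add: index_perm_third)

declare aa.simps(2) [simp del] AA.simps(2) [simp del]

locale D222 =
  fixes x y :: "nat \<Rightarrow> 'a::bounded_lattice_top"
  assumes modular_law: "\<And>a b c :: 'a. a \<le> c \<Longrightarrow> sup a (inf b c) = inf (sup a b) c"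
    and x_le_y: "\<And>l. l \<in> {1,2,3} \<Longrightarrow> x l \<le> y l"
begin

sublocale modular_lattice "inf :: 'a \<Rightarrow> 'a \<Rightarrow> 'a" "(\<le>)" "(<)" sup
  by (rule class.modular_lattice.intro[OF lattice_class.lattice_axioms])
    (unfold_locales, fact modular_law)

lemma x_le_y_perm: "index_perm i j k \<Longrightarrow> x i \<le> y i"
  by (simp add: index_perm_def x_le_y)

lemma sup_x_le_aa: "index_perm i j k \<Longrightarrow> sup (x i) (x j) \<le> aa x y i j n"
proof (induction n arbitrary: i j k)
  case (Suc n)
  have "x j \<le> aa x y j k n"
    using Suc.IH[OF index_perm_rotate[OF Suc.prems]] by simp
  moreover have "x j \<le> y j"
    using x_le_y_perm[OF index_perm_swap[OF Suc.prems]] .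
  ultimately show ?case
    by (simp add: aa_Suc_perm[OF Suc.prems] le_supI2)
qed simp

lemma AA_Suc_eq_aa:
  "index_perm i j k \<Longrightarrow> AA x y i j (Suc n) = sup (y i) (inf (x j) (aa x y i k n))"
proof (induction n arbitrary: i j k)
  case (Suc n)
  have kij: "index_perm k i j"
    using index_perm_rotate[OF index_perm_rotate[OF Suc.prems]] .
  have "x j \<le> aa x y k j n"
    using sup_x_le_aa[OF index_perm_swap[OF index_perm_rotate[OF Suc.prems]]] by simp
  then have "inf (x j) (sup (y k) (inf (x i) (aa x y k j n)))
      = inf (x j) (sup (x i) (inf (y k) (aa x y k j n)))"
    by (rule modular_inf_sup_swap)
  then show ?case
    using Suc.IH[OF kij]
    by (simp add: AA_Suc_perm[OF Suc.prems] aa_Suc_perm[OF index_perm_swap[OF kij]])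
qed (simp add: AA.simps index_perm_third)

lemma inf_x_AA_eq_aa:
  assumes ijk: "index_perm i j k"
  shows "inf (x k) (AA x y i j n) = inf (x k) (aa x y j i n)"
proof (cases n)
  case (Suc m)
  have "x k \<le> aa x y i k m"
    using sup_x_le_aa[OF index_perm_rotate[OF index_perm_swap[OF ijk]]] by simp
  then have "inf (x k) (sup (y i) (inf (x j) (aa x y i k m)))
      = inf (x k) (sup (x j) (inf (y i) (aa x y i k m)))"
    by (rule modular_inf_sup_swap)
  then show ?thesis
    by (simp add: Suc AA_Suc_eq_aa[OF ijk] aa_Suc_perm[OF index_perm_swap[OF ijk]])
qed simp

lemma inf_y_y_AA_eq_aa:
  "index_perm i j k \<Longrightarrow>
    inf (inf (y i) (y j)) (AA x y k i n) = inf (inf (y i) (y j)) (aa x y i k n)"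
proof (induction n arbitrary: i j k)
  case (Suc n)
  let ?z = "inf (y i) (y j)"
  have kij: "index_perm k i j"
    using index_perm_rotate[OF index_perm_rotate[OF Suc.prems]] .
  have xi: "x i \<le> y i"
    using x_le_y_perm[OF Suc.prems] .
  have "inf ?z (AA x y k i (Suc n)) = inf ?z (sup (y k) (inf (x i) (AA x y j k n)))"
    by (simp add: AA_Suc_perm[OF kij])
  also have "\<dots> = inf ?z (sup (x i) (inf (y k) (AA x y j k n)))"
    by (rule modular_inf_sup_swap, rule le_infI2, rule y_le_AA)
  also have "\<dots> = inf ?z (sup (x i) (inf (y i) (inf (y k) (AA x y j k n))))"
    using modular_inf_sup_inf_absorb[OF xi, of ?z] by simp
  also have "\<dots> = inf ?z (sup (x i) (inf (y i) (inf (y k) (aa x y k j n))))"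
    using Suc.IH[OF kij] by (simp add: ac_simps)
  also have "\<dots> = inf ?z (sup (x i) (inf (y k) (aa x y k j n)))"
    using modular_inf_sup_inf_absorb[OF xi, of ?z] by simp
  also have "\<dots> = inf ?z (aa x y i k (Suc n))"
    by (simp add: aa_Suc_perm[OF index_perm_rotate[OF index_perm_swap[OF Suc.prems]]])
  finally show ?case .
qed simp

lemma inf_y_aa_Suc_eq:
  assumes ijk: "index_perm i j k"
  shows "inf (y i) (aa x y i j (Suc n)) = inf (y i) (sup (x i) (inf (y j) (AA x y k j n)))"
proof -
  have xi: "x i \<le> y i"
    using x_le_y_perm[OF ijk] .
  have "inf (y i) (aa x y i j (Suc n))
      = inf (y i) (sup (x i) (inf (y i) (inf (y j) (aa x y j k n))))"
    using modular_inf_sup_inf_absorb[OF xi order_refl] by (simp add: aa_Suc_perm[OF ijk])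
  also have "\<dots> = inf (y i) (sup (x i) (inf (y i) (inf (y j) (AA x y k j n))))"
    using inf_y_y_AA_eq_aa[OF index_perm_swap[OF ijk], of n] by (simp add: ac_simps)
  also have "\<dots> = inf (y i) (sup (x i) (inf (y j) (AA x y k j n)))"
    using modular_inf_sup_inf_absorb[OF xi order_refl] by simp
  finally show ?thesis .
qed

end

theorem mainTheorem7:
  fixes x y :: "nat \<Rightarrow> 'a::bounded_lattice_top"
    and i j k :: nat
  assumes modular: "\<And>a b c :: 'a. a \<le> c \<Longrightarrow> sup a (inf b c) = inf (sup a b) c"
    and xy: "\<And>l. l \<in> {1,2,3} \<Longrightarrow> x l \<le> y l"
    and idx: "i \<in> {1,2,3}" "j \<in> {1,2,3}" "k \<in> {1,2,3}" "i \<noteq> j" "j \<noteq> k" "i \<noteq> k"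
  shows
    "((\<forall>n. aa x y i j (Suc n) \<le> aa x y i j n) \<and> (\<forall>n. sup (x i) (x j) \<le> aa x y i j n)) \<and>
     (\<forall>n. AA x y i j (Suc n) \<le> AA x y i j n) \<and>
     (\<forall>n. inf (x k) (AA x y i j n) = inf (x k) (aa x y j i n)) \<and>
     (\<forall>n\<ge>1. AA x y i j n = sup (y i) (inf (x j) (aa x y i k (n - 1)))) \<and>
     (\<forall>n. inf (inf (y i) (y j)) (AA x y k i n) = inf (inf (y i) (y j)) (aa x y i k n)) \<and>
     (\<forall>n. inf (y i) (aa x y i j (Suc n)) = inf (y i) (sup (x i) (inf (y j) (AA x y k j n))))"
proof -
  interpret D222 x y
    using modular xy by unfold_locales
  have ijk: "index_perm i j k"
    using idx by (simp add: index_perm_def)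
  have "AA x y i j n = sup (y i) (inf (x j) (aa x y i k (n - 1)))" if "n \<ge> 1" for n
    using AA_Suc_eq_aa[OF ijk, of "n - 1"] that by simp
  then show ?thesis
    using aa_Suc_le AA_Suc_le sup_x_le_aa[OF ijk] inf_x_AA_eq_aa[OF ijk]
      inf_y_y_AA_eq_aa[OF ijk] inf_y_aa_Suc_eq[OF ijk]
    by blast
qed

end
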